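(* Let $\mathbb{F}$ be a field of characteristic zero, let $J\ge0$ be an integer and $r,i$ integers with $r\ge2$, $1\le i\le r$. Define elements $N^J_{i,j,(r-1)d+j}\in\mathbb{F}[[q]]$ for integers $d\ge J+1$ and $1\le j\le r$ (indexed by the pair $(j,d)$) by the initial conditions $$N^J_{i,j,(r-1)(J+1)+j}=\begin{cases} q^{2(J+1)j-1}+q^{2(J+1)(j-1)} & 1\le j\le i-1,\\ q^{2(J+1)(j-1)} & j=i,\\ 0 & i+1\le j\le r,\end{cases}$$ and, for $d\ge J+1$ and $1\le j\le r$, the recursion $$N^J_{i,j,(r-1)(d+1)+j}=q^{2(d+1)(j-1)}\sum_{m=1}^{r-j+1}N^J_{i,m,(r-1)d+m}+q^{2(d+1)j-1}\sum_{m=1}^{r-j}N^J_{i,m,(r-1)d+m}.$$ Then for every integer $d\ge J+1$, $$\mathrm{HP}^{2J+1}_i=\sum_{j=1}^{r}N^J_{i,j,(r-1)d+j}\,\mathrm{HP}^{2d+1}_{r-j+1}.$$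
   Context: For $k\ge1$ let $S_k=\mathbb{F}[x_k,x_{k+1},x_{k+2},\ldots]$, graded by weight: the monomial $x_{i_1}^{\alpha_1}\cdots x_{i_m}^{\alpha_m}$ has weight $\sum_t i_t\alpha_t$. Fix $r\ge2$. For $k\ge1$, let $L_k$ be the ideal of $S_k$ generated by the monomials $x_{2a-1}^2$ ($2a-1\ge k$), $x_{2b-1}x_{2b}^{r-1}$ ($2b-1\ge k$), $x_{2c}^{r-n_1}x_{2c+2}^{n_1}$ ($2c\ge k$, $0\le n_1\le r-1$), and $x_{2c}^{r-n_2-1}x_{2c+1}x_{2c+2}^{n_2}$ ($2c\ge k$, $0\le n_2\le r-2$), where $a,b,c$ range over integers. For $1\le \ell\le r$ define the ideal $L_k^{\ell}$ of $S_k$ as follows: if $k$ is even, $L_k^\ell$ is generated by $x_k^{\ell}$, the monomials $x_k^{\ell-t}x_{k+2}^{r-\ell+t}$ and $x_k^{\ell-t}x_{k+1}x_{k+2}^{r-\ell+t-1}$ for $t=1,\ldots,\ell-1$, and the generators of $L_{k+1}$; if $k$ is odd, $L_k^\ell$ is generated by $x_k^2$, $x_kx_{k+1}^{\ell-1}$, and the generators of $L_{k+1}^{\ell}$. For a graded algebra $A=\bigoplus_{j\ge0}A_j$ with finite-dimensional components, its Hilbert–Poincaré series is $\sum_{j\ge0}\dim_{\mathbb{F}}(A_j)q^j$. Write $\mathrm{HP}^k_\ell$ for the Hilbert–Poincaré series of $S_k/L_k^\ell$ (a formal power series in $q$). *)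

theory Defs
  imports "HOL-Library.Poly_Mapping" "HOL-Computational_Algebra.Formal_Power_Series"
begin

text \<open>Monomials in the variables x_1, x_2, ... are exponent vectors (finitely supported
  maps from variable index to exponent); polynomials over the field are finitely supported
  maps from monomials to coefficients, with the convolution product of Poly_Mapping.\<close>

type_synonym mono = "nat \<Rightarrow>\<^sub>0 nat"
type_synonym 'a mpoly = "mono \<Rightarrow>\<^sub>0 'a"

definition weight :: "mono \<Rightarrow> nat" where
  "weight m = (\<Sum>i\<in>Poly_Mapping.keys m. i * Poly_Mapping.lookup m i)"

definition monom :: "mono \<Rightarrow> 'a::semiring_1 mpoly" where
  "monom m = Poly_Mapping.single m 1"

abbreviation xp :: "nat \<Rightarrow> nat \<Rightarrow> mono" where
  "xp i e \<equiv> Poly_Mapping.single i e"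

definition Spoly :: "nat \<Rightarrow> 'a::semiring_1 mpoly set" where
  "Spoly k = {p. \<forall>m\<in>Poly_Mapping.keys p. \<forall>v\<in>Poly_Mapping.keys m. k \<le> v}"

inductive_set gen_ideal :: "nat \<Rightarrow> mono set \<Rightarrow> 'a::semiring_1 mpoly set"
  for k :: nat and G :: "mono set" where
  zero: "0 \<in> gen_ideal k G"
| step: "g \<in> G \<Longrightarrow> q \<in> Spoly k \<Longrightarrow> p \<in> gen_ideal k G \<Longrightarrow> monom g * q + p \<in> gen_ideal k G"

text \<open>Generators of L_k (exponent vectors of the generating monomials).
  Odd indices 2a-1 / 2b-1 are the odd v, even indices 2c are the even v (v \<ge> k \<ge> 1).\<close>
definition Lgens :: "nat \<Rightarrow> nat \<Rightarrow> mono set" where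
  "Lgens r k =
     {xp v 2 | v. odd v \<and> k \<le> v}
   \<union> {xp v 1 + xp (v+1) (r-1) | v. odd v \<and> k \<le> v}
   \<union> {xp v (r-n1) + xp (v+2) n1 | v n1. even v \<and> k \<le> v \<and> n1 \<le> r-1}
   \<union> {xp v (r-n2-1) + xp (v+1) 1 + xp (v+2) n2 | v n2. even v \<and> k \<le> v \<and> n2 \<le> r-2}"

definition Lgens_even :: "nat \<Rightarrow> nat \<Rightarrow> nat \<Rightarrow> mono set" where
  "Lgens_even r l k =
     {xp k l}
   \<union> {xp k (l-t) + xp (k+2) (r-l+t) | t. 1 \<le> t \<and> t \<le> l-1}
   \<union> {xp k (l-t) + xp (k+1) 1 + xp (k+2) (r-l+t-1) | t. 1 \<le> t \<and> t \<le> l-1}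
   \<union> Lgens r (k+1)"

definition Lgens_l :: "nat \<Rightarrow> nat \<Rightarrow> nat \<Rightarrow> mono set" where
  "Lgens_l r l k =
     (if even k then Lgens_even r l k
      else {xp k 2, xp k 1 + xp (k+1) (l-1)} \<union> Lgens_even r l (k+1))"

definition comp :: "nat \<Rightarrow> nat \<Rightarrow> 'a::semiring_1 mpoly set" where
  "comp k j = {p \<in> Spoly k. \<forall>m\<in>Poly_Mapping.keys p. weight m = j}"

text \<open>B is linearly independent modulo the subspace W (scalars act as constant polynomials).\<close>
definition indep_mod :: "'a::field mpoly set \<Rightarrow> 'a mpoly set \<Rightarrow> bool" where
  "indep_mod W B \<longleftrightarrow> (\<forall>c. (\<Sum>b\<in>B. Poly_Mapping.single 0 (c b) * b) \<in> W \<longrightarrow> (\<forall>b\<in>B. c b = 0))"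

text \<open>Dimension of the image of V in the quotient by W, i.e. dim (V + W)/W:
  the maximal size of a finite subset of V that is linearly independent modulo W.\<close>
definition quot_dim :: "'a::field mpoly set \<Rightarrow> 'a mpoly set \<Rightarrow> nat" where
  "quot_dim V W = (GREATEST n. \<exists>B. B \<subseteq> V \<and> finite B \<and> card B = n \<and> indep_mod W B)"

text \<open>Hilbert-Poincare series of S_k / L_k^l (parameter r): coefficient of q^j is
  dim of the weight-j component of the quotient.\<close>
definition HP :: "nat \<Rightarrow> nat \<Rightarrow> nat \<Rightarrow> 'a::field fps" where
  "HP r k l = Abs_fps (\<lambda>j. of_nat (quot_dim (comp k j :: 'a mpoly set) (gen_ideal k (Lgens_l r l k))))"

text \<open>N^J_{i,j,(r-1)d+j}, indexed by (j,d); only meaningful for d \<ge> J+1.\<close>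
fun Ncoef :: "nat \<Rightarrow> nat \<Rightarrow> nat \<Rightarrow> nat \<Rightarrow> nat \<Rightarrow> 'a::field fps" where
  "Ncoef r J i d j =
    (if d \<le> J + 1 then
       (if 1 \<le> j \<and> j \<le> i - 1 then fps_X ^ (2*(J+1)*j - 1) + fps_X ^ (2*(J+1)*(j-1))
        else if j = i then fps_X ^ (2*(J+1)*(j-1))
        else 0)
     else
       fps_X ^ (2*d*(j-1)) * (\<Sum>m=1..r-j+1. Ncoef r J i (d-1) m)
       + fps_X ^ (2*d*j - 1) * (\<Sum>m=1..r-j. Ncoef r J i (d-1) m))"

declare Ncoef.simps[simp del]

end

theory Submission
  imports Defs
begin

(* For a monomial ideal I of S_k, the monomials of weight n outside I form a basis of the
   weight-n part of S_k / I, so the Hilbert-Poincare series counts them.  For k odd, a monomial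
   lies outside L_k^l iff its exponent vector e satisfies local conditions: e_k <= 1,
   e_(k+1) < l, e_(k+1) + 2 <= l if e_k = 1, and the conditions for L_(k+1) from k+1 on.
   Fixing a = e_k and b = e_(k+1) leaves exactly a monomial of S_(k+2) outside L_(k+2)^(r-b),
   shifted in weight by k a + (k+1) b.  Summing over the admissible (a, b) gives
     HP^k_l = sum_j M_(l,j) HP^(k+2)_(r-j+1),
     M_(l,j) = [j <= l] q^((k+1)(j-1)) + [j < l] q^((k+1)j-1),
   and the N^J are the entries of the products of these transfer matrices, which yields the
   theorem by induction on d. *)

unbundle fps_syntax

lemma homogeneous_system_nontrivial_solution:
  fixes v :: "'b \<Rightarrow> 'c \<Rightarrow> 'a::field"
  assumes "finite S" "finite B" "card S < card B"
  shows "\<exists>c. (\<exists>b\<in>B. c b \<noteq> 0) \<and> (\<forall>s\<in>S. (\<Sum>b\<in>B. c b * v b s) = 0)"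
  using assms
proof (induction S arbitrary: B v rule: finite_induct)
  case empty
  then obtain b where "b \<in> B" by fastforce
  then show ?case by (intro exI[of _ "\<lambda>_. 1"]) auto
next
  case (insert s S)
  show ?case
  proof (cases "\<exists>b0\<in>B. v b0 s \<noteq> 0")
    case False
    have "card S < card B" using insert by simp
    with insert.IH[OF insert.prems(1)] False show ?thesis by auto
  next
    case True
    then obtain b0 where b0: "b0 \<in> B" "v b0 s \<noteq> 0" by blast
    let ?B = "B - {b0}"
    define w where "w b t = v b t - v b s / v b0 s * v b0 t" for b t
    have "card S < card ?B" using insert b0 by simp
    then obtain c where c: "\<exists>b\<in>?B. c b \<noteq> 0" "\<forall>t\<in>S. (\<Sum>b\<in>?B. c b * w b t) = 0"
      using insert.IH[of ?B w] insert.prems(1) by blast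
    define lam where "lam = - (\<Sum>b\<in>?B. c b * v b s) / v b0 s"
    define c' where "c' = c(b0 := lam)"
    have sum_B: "(\<Sum>b\<in>B. c' b * v b t) = lam * v b0 t + (\<Sum>b\<in>?B. c b * v b t)" for t
      using b0 insert.prems(1) by (simp add: c'_def sum.remove)
    have sum_w: "(\<Sum>b\<in>?B. c b * w b t) = (\<Sum>b\<in>?B. c b * v b t) + lam * v b0 t" for t
    proof -
      have "c b * w b t = c b * v b t - c b * v b s / v b0 s * v b0 t" for b
        by (simp add: w_def algebra_simps)
      then show ?thesis
        by (simp add: lam_def sum_subtractf sum_distrib_right[symmetric] sum_divide_distrib[symmetric])
    qed
    have "(\<Sum>b\<in>B. c' b * v b s) = 0"
      using b0(2) by (simp add: sum_B lam_def)
    moreover have "(\<Sum>b\<in>B. c' b * v b t) = 0" if "t \<in> S" for t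
      using c(2) that sum_w[of t] by (simp add: sum_B add.commute)
    moreover have "\<exists>b\<in>B. c' b \<noteq> 0" using c(1) by (auto simp: c'_def)
    ultimately show ?thesis by auto
  qed
qed

definition mono_dvd :: "mono \<Rightarrow> mono \<Rightarrow> bool" where
  "mono_dvd g m \<longleftrightarrow> (\<forall>i. Poly_Mapping.lookup g i \<le> Poly_Mapping.lookup m i)"

definition Smonos :: "nat \<Rightarrow> nat \<Rightarrow> mono set" where
  "Smonos k n = {m. (\<forall>v\<in>Poly_Mapping.keys m. k \<le> v) \<and> weight m = n}"

definition standard_monos :: "nat \<Rightarrow> mono set \<Rightarrow> nat \<Rightarrow> mono set" where
  "standard_monos k G n = {m \<in> Smonos k n. \<not> (\<exists>g\<in>G. mono_dvd g m)}"

lemma mono_dvd_add_self: "mono_dvd g (g + m)"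
  by (simp add: mono_dvd_def lookup_add)

lemma mono_dvd_imp_add_diff: "mono_dvd g m \<Longrightarrow> g + (m - g) = m"
  by (intro poly_mapping_eqI) (simp add: mono_dvd_def lookup_add lookup_minus)

lemma lookup_const_mult:
  "Poly_Mapping.lookup (Poly_Mapping.single 0 c * p) m = c * Poly_Mapping.lookup p m"
  by (simp add: mult_map_scale_conv_mult[symmetric] map.rep_eq when_def)

lemma weight_eq_sum:
  assumes "finite A" "Poly_Mapping.keys m \<subseteq> A"
  shows "weight m = (\<Sum>i\<in>A. i * Poly_Mapping.lookup m i)"
  unfolding weight_def by (rule sum.mono_neutral_left) (use assms in \<open>auto simp: in_keys_iff\<close>)

lemma weight_add: "weight (m + m') = weight m + weight m'"
proof -
  let ?A = "Poly_Mapping.keys m \<union> Poly_Mapping.keys m'"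
  have "weight (m + m') = (\<Sum>i\<in>?A. i * Poly_Mapping.lookup (m + m') i)"
    by (rule weight_eq_sum) (auto dest: keys_add[THEN subsetD])
  also have "\<dots> = (\<Sum>i\<in>?A. i * Poly_Mapping.lookup m i) + (\<Sum>i\<in>?A. i * Poly_Mapping.lookup m' i)"
    by (simp add: lookup_add algebra_simps sum.distrib)
  also have "\<dots> = weight m + weight m'"
    using weight_eq_sum[of ?A m] weight_eq_sum[of ?A m'] by simp
  finally show ?thesis .
qed

lemma weight_single [simp]: "weight (Poly_Mapping.single i e) = i * e"
  by (simp add: weight_def)

lemma keys_gen_ideal_divisible:
  assumes "p \<in> gen_ideal k G" "m \<in> Poly_Mapping.keys p"
  shows "\<exists>g\<in>G. mono_dvd g m"
  using assms
proof (induction arbitrary: m)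
  case (step g q p)
  have "Poly_Mapping.keys (monom g * q) \<subseteq> (+) g ` Poly_Mapping.keys q"
    using keys_mult[of "monom g" q] by (auto simp: monom_def)
  then show ?case
    using step keys_add[of "monom g * q" p] mono_dvd_add_self by blast
qed simp

lemma gen_ideal_if_keys_divisible:
  fixes p :: "'a::comm_ring_1 mpoly"
  assumes "p \<in> Spoly k" "\<forall>m\<in>Poly_Mapping.keys p. \<exists>g\<in>G. mono_dvd g m"
  shows "p \<in> gen_ideal k G"
  using assms
proof (induction p rule: update_induct)
  case const
  show ?case by (rule gen_ideal.zero)
next
  case (update p m c)
  have keys: "Poly_Mapping.keys (Poly_Mapping.update m c p) = insert m (Poly_Mapping.keys p)"
    using update.hyps by (simp add: keys_update)
  obtain g where g: "g \<in> G" "mono_dvd g m"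
    using update.prems(2) keys by auto
  have "Poly_Mapping.single (m - g) c \<in> Spoly k"
    using update.prems(1) update.hyps(2)
    by (fastforce simp: Spoly_def keys in_keys_iff lookup_minus)
  moreover have "p \<in> gen_ideal k G"
    using update.prems keys by (intro update.IH) (auto simp: Spoly_def)
  ultimately have "monom g * Poly_Mapping.single (m - g) c + p \<in> gen_ideal k G"
    by (rule gen_ideal.step[OF g(1)])
  moreover have "monom g * Poly_Mapping.single (m - g) c + p = Poly_Mapping.update m c p"
    using update.hyps mono_dvd_imp_add_diff[OF g(2)]
    by (intro poly_mapping_eqI)
      (auto simp: monom_def mult_single lookup_add lookup_update lookup_single in_keys_iff when_def)
  ultimately show ?case by simp
qed

lemma finite_Smonos:
  assumes "k \<ge> 1"
  shows "finite (Smonos k n)"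
proof -
  let ?F = "{f. \<forall>x. (x \<in> {..n} \<longrightarrow> f x \<in> {..n}) \<and> (x \<notin> {..n} \<longrightarrow> f x = 0)}"
  have bounded: "i \<le> n \<and> Poly_Mapping.lookup m i \<le> n"
    if "m \<in> Smonos k n" "i \<in> Poly_Mapping.keys m" for m i
  proof -
    have "i * Poly_Mapping.lookup m i \<le> weight m"
      unfolding weight_def using that(2) by (intro member_le_sum) auto
    moreover have "1 \<le> i"
      using that assms by (auto simp: Smonos_def)
    moreover have "1 \<le> Poly_Mapping.lookup m i"
      using that(2) by (simp add: in_keys_iff)
    ultimately have "i \<le> weight m" "Poly_Mapping.lookup m i \<le> weight m"
      using le_trans[of i "i * Poly_Mapping.lookup m i"]
        le_trans[of "Poly_Mapping.lookup m i" "i * Poly_Mapping.lookup m i"] by simp_all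
    then show ?thesis
      using that(1) by (simp add: Smonos_def)
  qed
  have "Poly_Mapping.lookup m \<in> ?F" if "m \<in> Smonos k n" for m
  proof (intro CollectI allI conjI impI)
    fix x
    show "Poly_Mapping.lookup m x \<in> {..n}" if "x \<in> {..n}"
      using bounded[OF \<open>m \<in> Smonos k n\<close>, of x]
      by (cases "Poly_Mapping.lookup m x = 0") (auto simp: in_keys_iff)
    show "Poly_Mapping.lookup m x = 0" if "x \<notin> {..n}"
      using bounded[OF \<open>m \<in> Smonos k n\<close>, of x] that by (auto simp: in_keys_iff)
  qed
  then have "Poly_Mapping.lookup ` Smonos k n \<subseteq> ?F" by (rule image_subsetI)
  then have "finite (Poly_Mapping.lookup ` Smonos k n)"
    by (rule finite_subset) (intro finite_set_of_finite_funs finite_atMost)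
  then show ?thesis
    by (rule finite_imageD) (simp add: inj_on_def poly_mapping_eqI)
qed

lemma finite_standard_monos: "k \<ge> 1 \<Longrightarrow> finite (standard_monos k G n)"
  unfolding standard_monos_def using finite_Smonos by auto

lemma indep_mod_standard_monos:
  assumes "k \<ge> 1"
  shows "indep_mod (gen_ideal k G) ((monom :: mono \<Rightarrow> 'a::field mpoly) ` standard_monos k G n)"
  unfolding indep_mod_def
proof (intro allI impI ballI)
  fix c b
  let ?B = "(monom :: mono \<Rightarrow> 'a mpoly) ` standard_monos k G n"
  let ?p = "\<Sum>b\<in>?B. Poly_Mapping.single 0 (c b) * b"
  assume p: "?p \<in> gen_ideal k G" and b: "b \<in> ?B"
  then obtain s where s: "s \<in> standard_monos k G n" "b = monom s" by blast
  have "Poly_Mapping.lookup ?p s = (\<Sum>b'\<in>?B. if b' = b then c b' else 0)"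
    unfolding lookup_sum lookup_const_mult s(2)
    by (intro sum.cong) (auto simp: monom_def lookup_single when_def split: if_splits)
  also have "\<dots> = c b"
    using b finite_standard_monos[OF assms] by (simp add: sum.delta)
  finally have "Poly_Mapping.lookup ?p s = c b" .
  moreover have "s \<notin> Poly_Mapping.keys ?p"
    using keys_gen_ideal_divisible[OF p] s(1) by (auto simp: standard_monos_def)
  ultimately show "c b = 0" by (simp add: in_keys_iff)
qed

lemma card_indep_mod_le_standard_monos:
  fixes B :: "'a::field mpoly set"
  assumes "k \<ge> 1" "B \<subseteq> comp k n" "finite B" "indep_mod (gen_ideal k G) B"
  shows "card B \<le> card (standard_monos k G n)"
proof (rule ccontr)
  let ?S = "standard_monos k G n"
  assume "\<not> card B \<le> card ?S"
  moreover have "finite ?S"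
    using assms(1) by (rule finite_standard_monos)
  ultimately obtain c where c: "\<exists>b\<in>B. c b \<noteq> 0" "\<forall>s\<in>?S. (\<Sum>b\<in>B. c b * Poly_Mapping.lookup b s) = 0"
    using homogeneous_system_nontrivial_solution[of ?S B "\<lambda>b s. Poly_Mapping.lookup b s"] assms(3)
    by fastforce
  let ?p = "\<Sum>b\<in>B. Poly_Mapping.single 0 (c b) * b"
  have lookup_p: "Poly_Mapping.lookup ?p m = (\<Sum>b\<in>B. c b * Poly_Mapping.lookup b m)" for m
    by (simp add: lookup_sum lookup_const_mult)
  have keys_p: "\<exists>b\<in>B. m \<in> Poly_Mapping.keys b" if "m \<in> Poly_Mapping.keys ?p" for m
    using that by (auto simp: in_keys_iff lookup_p intro: ccontr)
  have "?p \<in> Spoly k"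
    using assms(2) keys_p by (fastforce simp: Spoly_def comp_def)
  moreover have "\<exists>g\<in>G. mono_dvd g m" if m: "m \<in> Poly_Mapping.keys ?p" for m
  proof -
    obtain b where "b \<in> B" "m \<in> Poly_Mapping.keys b" using keys_p[OF m] by blast
    then have "m \<in> Smonos k n" using assms(2) by (auto simp: comp_def Spoly_def Smonos_def)
    moreover have "m \<notin> ?S" using m c(2) by (auto simp: in_keys_iff lookup_p)
    ultimately show ?thesis by (simp add: standard_monos_def)
  qed
  ultimately have "?p \<in> gen_ideal k G" by (intro gen_ideal_if_keys_divisible) auto
  then show False
    using assms(4) c(1) unfolding indep_mod_def by blast
qed

lemma quot_dim_gen_ideal:
  assumes "k \<ge> 1"
  shows "quot_dim (comp k n :: 'a::field mpoly set) (gen_ideal k G) = card (standard_monos k G n)"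
  unfolding quot_dim_def
proof (rule Greatest_equality)
  let ?B = "(monom :: mono \<Rightarrow> 'a mpoly) ` standard_monos k G n"
  have "?B \<subseteq> comp k n \<and> finite ?B \<and> card ?B = card (standard_monos k G n)
      \<and> indep_mod (gen_ideal k G) ?B"
  proof (intro conjI)
    show "?B \<subseteq> comp k n"
      by (auto simp: comp_def Spoly_def monom_def standard_monos_def Smonos_def)
    show "finite ?B"
      using finite_standard_monos[OF assms] by blast
    have "inj (monom :: mono \<Rightarrow> 'a mpoly)"
      by (rule injI) (metis monom_def lookup_single_eq single_zero zero_neq_one lookup_single_not_eq)
    then show "card ?B = card (standard_monos k G n)"
      by (simp add: card_image inj_on_subset)
    show "indep_mod (gen_ideal k G) ?B"
      using assms by (rule indep_mod_standard_monos)
  qed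
  then show "\<exists>B. B \<subseteq> comp k n \<and> finite B \<and> card B = card (standard_monos k G n)
      \<and> indep_mod (gen_ideal k G) (B :: 'a mpoly set)"
    by (rule exI)
next
  fix d
  assume "\<exists>B. B \<subseteq> comp k n \<and> finite B \<and> card B = d
      \<and> indep_mod (gen_ideal k G) (B :: 'a mpoly set)"
  then show "d \<le> card (standard_monos k G n)"
    using card_indep_mod_le_standard_monos[OF assms] by auto
qed

definition avoids_odd_gens :: "nat \<Rightarrow> nat \<Rightarrow> (nat \<Rightarrow> nat) \<Rightarrow> bool" where
  "avoids_odd_gens l v e \<longleftrightarrow> e v \<le> 1 \<and> (e v \<noteq> 0 \<longrightarrow> e (v+1) + 2 \<le> l)"

definition avoids_even_gens :: "nat \<Rightarrow> nat \<Rightarrow> (nat \<Rightarrow> nat) \<Rightarrow> bool" where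
  "avoids_even_gens r v e \<longleftrightarrow>
     (e v \<noteq> 0 \<longrightarrow> e v + e (v+2) < r) \<and> (e v \<noteq> 0 \<and> e (v+1) \<noteq> 0 \<longrightarrow> e v + e (v+2) + 1 < r)"

definition avoids_gens_at :: "nat \<Rightarrow> nat \<Rightarrow> (nat \<Rightarrow> nat) \<Rightarrow> bool" where
  "avoids_gens_at r v e \<longleftrightarrow> (if odd v then avoids_odd_gens r v e else avoids_even_gens r v e)"

definition standard_exps :: "nat \<Rightarrow> nat \<Rightarrow> nat \<Rightarrow> (nat \<Rightarrow> nat) \<Rightarrow> bool" where
  "standard_exps r l k e \<longleftrightarrow> avoids_odd_gens l k e \<and> e (k+1) < l \<and> (\<forall>v\<ge>k+1. avoids_gens_at r v e)"

lemma all_ge_iff_Suc: "(\<forall>v\<ge>k. P v) \<longleftrightarrow> P k \<and> (\<forall>v\<ge>Suc k. P v)"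
  by (metis Suc_leD le_antisym not_less_eq_eq order_refl)

lemma mono_dvd_single: "mono_dvd (xp a e) m \<longleftrightarrow> e \<le> Poly_Mapping.lookup m a"
  by (auto simp: mono_dvd_def lookup_single when_def dest: spec[of _ a])

lemma mono_dvd_add_single:
  assumes "Poly_Mapping.lookup g a = 0"
  shows "mono_dvd (g + xp a e) m \<longleftrightarrow> mono_dvd g m \<and> e \<le> Poly_Mapping.lookup m a"
proof -
  have "Poly_Mapping.lookup (g + xp a e) i =
      (if i = a then e else Poly_Mapping.lookup g i)" for i
    using assms by (simp add: lookup_add lookup_single when_def)
  then show ?thesis
    unfolding mono_dvd_def using assms by (metis le0)
qed

lemmas mono_dvd_simps = mono_dvd_single mono_dvd_add_single lookup_add lookup_single when_def

lemma dvd_odd_gens_iff: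
  "(mono_dvd (xp v 2) m \<or> mono_dvd (xp v 1 + xp (v+1) (l-1)) m)
     \<longleftrightarrow> \<not> avoids_odd_gens l v (Poly_Mapping.lookup m)"
  by (auto simp: avoids_odd_gens_def mono_dvd_simps)

lemma dvd_even_gens_iff:
  assumes "r \<ge> 2"
  shows "((\<exists>n1\<le>r-1. mono_dvd (xp v (r-n1) + xp (v+2) n1) m)
        \<or> (\<exists>n2\<le>r-2. mono_dvd (xp v (r-n2-1) + xp (v+1) 1 + xp (v+2) n2) m))
     \<longleftrightarrow> \<not> avoids_even_gens r v (Poly_Mapping.lookup m)"
proof -
  let ?e = "Poly_Mapping.lookup m"
  have "(\<exists>n1\<le>r-1. r - n1 \<le> ?e v \<and> n1 \<le> ?e (v+2))
      \<longleftrightarrow> ?e v \<noteq> 0 \<and> r \<le> ?e v + ?e (v+2)"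
    using assms by (auto intro!: exI[of _ "min (?e (v+2)) (r-1)"])
  moreover have "(\<exists>n2\<le>r-2. r - n2 - 1 \<le> ?e v \<and> 1 \<le> ?e (v+1) \<and> n2 \<le> ?e (v+2))
      \<longleftrightarrow> ?e v \<noteq> 0 \<and> ?e (v+1) \<noteq> 0 \<and> r \<le> ?e v + ?e (v+2) + 1"
    using assms by (auto intro!: exI[of _ "min (?e (v+2)) (r-2)"])
  ultimately show ?thesis
    by (auto simp: avoids_even_gens_def mono_dvd_simps)
qed

lemma dvd_local_gens_iff:
  assumes "l \<le> r"
  shows "(mono_dvd (xp k l) m
        \<or> (\<exists>t. 1 \<le> t \<and> t \<le> l-1 \<and> mono_dvd (xp k (l-t) + xp (k+2) (r-l+t)) m)
        \<or> (\<exists>t. 1 \<le> t \<and> t \<le> l-1 \<and> mono_dvd (xp k (l-t) + xp (k+1) 1 + xp (k+2) (r-l+t-1)) m))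
     \<longleftrightarrow> \<not> (Poly_Mapping.lookup m k < l \<and> avoids_even_gens r k (Poly_Mapping.lookup m))"
proof -
  let ?e = "Poly_Mapping.lookup m"
  have "(\<exists>t. 1 \<le> t \<and> t \<le> l-1 \<and> l - t \<le> ?e k \<and> r - l + t \<le> ?e (k+2))
      \<longleftrightarrow> ?e k \<noteq> 0 \<and> r \<le> ?e k + ?e (k+2)" if "?e k < l"
    using assms that by (auto intro!: exI[of _ "l - ?e k"])
  moreover have "(\<exists>t. 1 \<le> t \<and> t \<le> l-1 \<and> l - t \<le> ?e k \<and> 1 \<le> ?e (k+1) \<and> r - l + t - 1 \<le> ?e (k+2))
      \<longleftrightarrow> ?e k \<noteq> 0 \<and> ?e (k+1) \<noteq> 0 \<and> r \<le> ?e k + ?e (k+2) + 1" if "?e k < l"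
    using assms that by (auto intro!: exI[of _ "l - ?e k"])
  ultimately show ?thesis
    by (cases "?e k < l") (auto simp: avoids_even_gens_def mono_dvd_simps)
qed

lemma Lgens_dvd_iff:
  assumes "r \<ge> 2"
  shows "(\<exists>g\<in>Lgens r k. mono_dvd g m) \<longleftrightarrow> (\<exists>v\<ge>k. \<not> avoids_gens_at r v (Poly_Mapping.lookup m))"
proof -
  have "(\<exists>g\<in>Lgens r k. mono_dvd g m) \<longleftrightarrow> (\<exists>v\<ge>k.
      (odd v \<and> (mono_dvd (xp v 2) m \<or> mono_dvd (xp v 1 + xp (v+1) (r-1)) m))
    \<or> (even v \<and> ((\<exists>n1\<le>r-1. mono_dvd (xp v (r-n1) + xp (v+2) n1) m)
        \<or> (\<exists>n2\<le>r-2. mono_dvd (xp v (r-n2-1) + xp (v+1) 1 + xp (v+2) n2) m))))"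
    unfolding Lgens_def by blast
  then show ?thesis
    unfolding avoids_gens_at_def dvd_odd_gens_iff dvd_even_gens_iff[OF assms] by auto
qed

lemma Lgens_l_dvd_iff:
  assumes "r \<ge> 2" "odd k" "l \<le> r"
  shows "(\<exists>g\<in>Lgens_l r l k. mono_dvd g m) \<longleftrightarrow> \<not> standard_exps r l k (Poly_Mapping.lookup m)"
proof -
  let ?e = "Poly_Mapping.lookup m"
  have "(\<exists>g\<in>Lgens_l r l k. mono_dvd g m) \<longleftrightarrow>
      (mono_dvd (xp k 2) m \<or> mono_dvd (xp k 1 + xp (k+1) (l-1)) m)
    \<or> (mono_dvd (xp (k+1) l) m
        \<or> (\<exists>t. 1 \<le> t \<and> t \<le> l-1 \<and> mono_dvd (xp (k+1) (l-t) + xp (k+1+2) (r-l+t)) m)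
        \<or> (\<exists>t. 1 \<le> t \<and> t \<le> l-1 \<and> mono_dvd (xp (k+1) (l-t) + xp (k+1+1) 1 + xp (k+1+2) (r-l+t-1)) m))
    \<or> (\<exists>g\<in>Lgens r (k+2). mono_dvd g m)"
    using assms(2) unfolding Lgens_l_def Lgens_even_def by auto
  also have "\<dots> \<longleftrightarrow> \<not> avoids_odd_gens l k ?e \<or> \<not> (?e (k+1) < l \<and> avoids_even_gens r (k+1) ?e)
      \<or> (\<exists>v\<ge>k+2. \<not> avoids_gens_at r v ?e)"
    unfolding dvd_odd_gens_iff dvd_local_gens_iff[OF assms(3)] Lgens_dvd_iff[OF assms(1)] ..
  also have "\<dots> \<longleftrightarrow> \<not> standard_exps r l k ?e"
    using assms(2) all_ge_iff_Suc[of "k+1" "\<lambda>v. avoids_gens_at r v ?e"]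
    by (auto simp: standard_exps_def avoids_gens_at_def)
  finally show ?thesis .
qed

lemma standard_exps_cong:
  assumes "\<And>i. i \<ge> k \<Longrightarrow> e i = e' i"
  shows "standard_exps r l k e \<longleftrightarrow> standard_exps r l k e'"
proof -
  have "avoids_gens_at r v e \<longleftrightarrow> avoids_gens_at r v e'" if "v \<ge> k" for v
    using assms that by (simp add: avoids_gens_at_def avoids_odd_gens_def avoids_even_gens_def)
  then show ?thesis
    using assms by (simp add: standard_exps_def avoids_odd_gens_def)
qed

lemma standard_exps_shift:
  assumes "r \<ge> 2" "odd k" "e (k+1) < l"
  shows "standard_exps r l k e \<longleftrightarrow> avoids_odd_gens l k e \<and> standard_exps r (r - e (k+1)) (k+2) e"
proof -
  have idx: "k+1+1 = k+2" "k+1+2 = k+3" "k+2+1 = k+3" by simp_all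
  have "(\<forall>v\<ge>k+1. P v) \<longleftrightarrow> P (k+1) \<and> P (k+2) \<and> (\<forall>v\<ge>k+3. P v)" for P
    using all_ge_iff_Suc[of "k+1" P] all_ge_iff_Suc[of "k+2" P] by (simp add: numeral_3_eq_3)
  then have tail: "(\<forall>v\<ge>k+1. avoids_gens_at r v e) \<longleftrightarrow>
      avoids_even_gens r (k+1) e \<and> avoids_odd_gens r (k+2) e \<and> (\<forall>v\<ge>k+3. avoids_gens_at r v e)"
    using assms(2) by (simp add: avoids_gens_at_def)
  have "e (k+3) < r" if "avoids_gens_at r (k+3) e"
    using assms(1,2) that by (auto simp: avoids_gens_at_def avoids_even_gens_def)
  moreover have "avoids_even_gens r (k+1) e \<and> avoids_odd_gens r (k+2) e
      \<longleftrightarrow> avoids_odd_gens (r - e (k+1)) (k+2) e \<and> e (k+3) < r - e (k+1)" if "e (k+3) < r"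
    using that unfolding avoids_even_gens_def avoids_odd_gens_def idx by auto
  ultimately show ?thesis
    unfolding standard_exps_def tail idx using assms(3) by auto
qed

definition standard_count :: "nat \<Rightarrow> nat \<Rightarrow> nat \<Rightarrow> nat \<Rightarrow> nat" where
  "standard_count r l k n = card {m \<in> Smonos k n. standard_exps r l k (Poly_Mapping.lookup m)}"

lemma HP_eq_standard_count:
  assumes "r \<ge> 2" "odd k" "l \<le> r"
  shows "(HP r k l :: 'a::field fps) = Abs_fps (\<lambda>n. of_nat (standard_count r l k n))"
proof -
  have "k \<ge> 1" using assms(2) by (simp add: odd_pos Suc_le_eq)
  have "standard_monos k (Lgens_l r l k) n = {m \<in> Smonos k n. standard_exps r l k (Poly_Mapping.lookup m)}" for n
    using Lgens_l_dvd_iff[OF assms] by (auto simp: standard_monos_def)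
  then show ?thesis
    unfolding HP_def quot_dim_gen_ideal[OF \<open>k \<ge> 1\<close>] standard_count_def by simp
qed

lemma Smonos_fiber:
  fixes a b k n :: nat
  defines "w \<equiv> k*a + (k+1)*b"
  shows "{m \<in> Smonos k n. Poly_Mapping.lookup m k = a \<and> Poly_Mapping.lookup m (k+1) = b}
       = (\<lambda>m'. xp k a + xp (k+1) b + m') ` {m' \<in> Smonos (k+2) (n - w). w \<le> n}"
    (is "?F = ?glue ` ?S")
proof (intro set_eqI iffI)
  fix m assume m: "m \<in> ?F"
  define m' where "m' = m - (xp k a + xp (k+1) b)"
  have lookup_m': "Poly_Mapping.lookup m' i = (if i = k \<or> i = k+1 then 0 else Poly_Mapping.lookup m i)" for i
    using m by (auto simp: m'_def lookup_minus lookup_add lookup_single when_def)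
  have glue: "m = ?glue m'"
    using m by (intro poly_mapping_eqI) (auto simp: lookup_m' lookup_add lookup_single when_def)
  have "weight m = w + weight m'"
    by (subst glue) (simp add: weight_add w_def)
  moreover have "k + 2 \<le> v" if "v \<in> Poly_Mapping.keys m'" for v
  proof -
    have "v \<noteq> k" "v \<noteq> k+1" "v \<in> Poly_Mapping.keys m"
      using that by (auto simp: in_keys_iff lookup_m' split: if_splits)
    with m show ?thesis by (fastforce simp: Smonos_def)
  qed
  ultimately have "m' \<in> ?S"
    using m by (auto simp: Smonos_def)
  with glue show "m \<in> ?glue ` ?S" by blast
next
  fix m assume "m \<in> ?glue ` ?S"
  then obtain m' where m': "m' \<in> ?S" and glue: "m = ?glue m'" by blast
  have "k \<notin> Poly_Mapping.keys m'" "k+1 \<notin> Poly_Mapping.keys m'"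
    using m' by (auto simp: Smonos_def)
  then have "Poly_Mapping.lookup m' k = 0" "Poly_Mapping.lookup m' (k+1) = 0"
    by (simp_all add: in_keys_iff)
  then have "Poly_Mapping.lookup m k = a" "Poly_Mapping.lookup m (k+1) = b"
    by (simp_all add: glue lookup_add lookup_single)
  moreover have "k \<le> v" if "v \<in> Poly_Mapping.keys m" for v
  proof -
    have "v \<in> Poly_Mapping.keys (xp k a) \<union> Poly_Mapping.keys (xp (k+1) b) \<union> Poly_Mapping.keys m'"
      using that keys_add[of "xp k a + xp (k+1) b" m'] keys_add[of "xp k a" "xp (k+1) b"]
      unfolding glue by blast
    then show ?thesis
      using m' by (auto simp: Smonos_def split: if_splits)
  qed
  moreover have "weight m = n"
    using m' by (simp add: glue weight_add w_def Smonos_def)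
  ultimately show "m \<in> ?F" by (simp add: Smonos_def)
qed

lemma standard_exps_glue:
  assumes "r \<ge> 2" "odd k" "b < l" "a \<le> 1" "m' \<in> Smonos (k+2) n'"
  shows "standard_exps r l k (Poly_Mapping.lookup (xp k a + xp (k+1) b + m'))
     \<longleftrightarrow> (a = 1 \<longrightarrow> b + 2 \<le> l) \<and> standard_exps r (r-b) (k+2) (Poly_Mapping.lookup m')"
proof -
  let ?e = "Poly_Mapping.lookup (xp k a + xp (k+1) b + m')"
  have "k \<notin> Poly_Mapping.keys m'" "k+1 \<notin> Poly_Mapping.keys m'"
    using assms(5) by (auto simp: Smonos_def)
  then have "?e k = a" "?e (k+1) = b"
    by (simp_all add: in_keys_iff lookup_add lookup_single)
  then have "standard_exps r l k ?e \<longleftrightarrow> (a = 1 \<longrightarrow> b + 2 \<le> l) \<and> standard_exps r (r-b) (k+2) ?e"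
    using standard_exps_shift[OF assms(1,2), of ?e l] assms(3,4) by (auto simp: avoids_odd_gens_def)
  also have "standard_exps r (r-b) (k+2) ?e \<longleftrightarrow> standard_exps r (r-b) (k+2) (Poly_Mapping.lookup m')"
    by (rule standard_exps_cong) (simp add: lookup_add lookup_single)
  finally show ?thesis .
qed

lemma card_standard_fiber:
  fixes a b k n :: nat
  assumes "r \<ge> 2" "odd k" "b < l" "a \<le> 1"
  defines "w \<equiv> k*a + (k+1)*b"
  shows "card {m \<in> Smonos k n. standard_exps r l k (Poly_Mapping.lookup m)
                \<and> Poly_Mapping.lookup m k = a \<and> Poly_Mapping.lookup m (k+1) = b}
       = (if (a = 1 \<longrightarrow> b + 2 \<le> l) \<and> w \<le> n then standard_count r (r-b) (k+2) (n - w) else 0)"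
    (is "card ?F = _")
proof -
  let ?glue = "\<lambda>m'. xp k a + xp (k+1) b + m'"
  let ?T = "{m' \<in> Smonos (k+2) (n - w). standard_exps r (r-b) (k+2) (Poly_Mapping.lookup m')}"
  have "?F = {m \<in> {m \<in> Smonos k n. Poly_Mapping.lookup m k = a \<and> Poly_Mapping.lookup m (k+1) = b}.
               standard_exps r l k (Poly_Mapping.lookup m)}"
    by blast
  also have "\<dots> = {m \<in> ?glue ` {m' \<in> Smonos (k+2) (n - w). w \<le> n}.
               standard_exps r l k (Poly_Mapping.lookup m)}"
    unfolding w_def Smonos_fiber ..
  also have "\<dots> = ?glue ` {m' \<in> Smonos (k+2) (n - w).
               w \<le> n \<and> standard_exps r l k (Poly_Mapping.lookup (?glue m'))}"
    by blast
  also have "\<dots> = ?glue ` {m' \<in> ?T. (a = 1 \<longrightarrow> b + 2 \<le> l) \<and> w \<le> n}"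
    by (rule arg_cong[where f="image ?glue"], rule Collect_cong) (use standard_exps_glue[OF assms(1-4)] in blast)
  finally have "?F = ?glue ` {m' \<in> ?T. (a = 1 \<longrightarrow> b + 2 \<le> l) \<and> w \<le> n}" .
  moreover have "inj_on ?glue X" for X
    by (simp add: inj_on_def)
  ultimately show ?thesis
    by (simp add: card_image standard_count_def)
qed

lemma card_eq_sum_card_fibers:
  assumes "finite A" "finite B" "f ` A \<subseteq> B"
  shows "card A = (\<Sum>y\<in>B. card {x \<in> A. f x = y})"
proof -
  have "A = (\<Union>y\<in>B. {x \<in> A. f x = y})"
    using assms(3) by blast
  also have "card \<dots> = (\<Sum>y\<in>B. card {x \<in> A. f x = y})"
    using assms(1,2) by (intro card_UN_disjoint) auto
  finally show ?thesis .
qed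

lemma standard_count_rec:
  assumes "r \<ge> 2" "odd k"
  shows "standard_count r l k n = (\<Sum>b<l.
      (if (k+1)*b \<le> n then standard_count r (r-b) (k+2) (n - (k+1)*b) else 0)
    + (if b + 2 \<le> l \<and> k + (k+1)*b \<le> n then standard_count r (r-b) (k+2) (n - (k + (k+1)*b)) else 0))"
    (is "_ = (\<Sum>b<l. ?g b)")
proof -
  let ?A = "{m \<in> Smonos k n. standard_exps r l k (Poly_Mapping.lookup m)}"
  let ?f = "\<lambda>m. (Poly_Mapping.lookup m (k+1), Poly_Mapping.lookup m k)"
  let ?fiber = "\<lambda>b a. card {m \<in> Smonos k n. standard_exps r l k (Poly_Mapping.lookup m)
      \<and> Poly_Mapping.lookup m k = a \<and> Poly_Mapping.lookup m (k+1) = b}"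
  have fin: "finite ?A"
    using finite_Smonos[of k n] assms(2) by (simp add: odd_pos Suc_le_eq)
  have img: "?f ` ?A \<subseteq> {..<l} \<times> {..1}"
    by (auto simp: standard_exps_def avoids_odd_gens_def)
  have "standard_count r l k n = (\<Sum>y\<in>{..<l} \<times> {..1}. card {m \<in> ?A. ?f m = y})"
    unfolding standard_count_def by (rule card_eq_sum_card_fibers[OF fin _ img]) simp
  also have "\<dots> = (\<Sum>b<l. ?fiber b 0 + ?fiber b 1)"
    unfolding sum.cartesian_product' by (simp add: conj_ac)
  also have "\<dots> = (\<Sum>b<l. ?g b)"
  proof (intro sum.cong refl)
    fix b assume "b \<in> {..<l}"
    then show "?fiber b 0 + ?fiber b 1 = ?g b"
      using card_standard_fiber[OF assms, of b l 0 n] card_standard_fiber[OF assms, of b l 1 n] by simp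
  qed
  finally show ?thesis .
qed

definition step_coeff :: "nat \<Rightarrow> nat \<Rightarrow> nat \<Rightarrow> 'a::field fps" where
  "step_coeff l e j = (if j \<le> l then fps_X ^ (e*(j-1)) else 0) + (if j+1 \<le> l then fps_X ^ (e*j-1) else 0)"

lemma step_coeff_mult_nth:
  "(step_coeff l (k+1) (Suc b) * F) $ n =
     (if b < l \<and> (k+1)*b \<le> n then F $ (n - (k+1)*b) else 0)
   + (if b + 2 \<le> l \<and> k + (k+1)*b \<le> n then F $ (n - (k + (k+1)*b)) else 0)"
  by (simp add: step_coeff_def distrib_right fps_X_power_mult_nth not_less)

lemma HP_odd_expand:
  assumes "r \<ge> 2" "odd k" "l \<le> r"
  shows "(HP r k l :: 'a::field fps) = (\<Sum>j=1..r. step_coeff l (k+1) j * HP r (k+2) (r-j+1))"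
proof (rule fps_ext)
  fix n
  let ?c = "\<lambda>b n'. of_nat (standard_count r (r-b) (k+2) n') :: 'a"
  let ?g = "\<lambda>b. (if b < l \<and> (k+1)*b \<le> n then ?c b (n - (k+1)*b) else 0)
      + (if b + 2 \<le> l \<and> k + (k+1)*b \<le> n then ?c b (n - (k + (k+1)*b)) else 0)"
  have "(HP r k l :: 'a fps) $ n = (\<Sum>b<l. ?g b)"
    unfolding HP_eq_standard_count[OF assms] standard_count_rec[OF assms(1,2)]
    by (simp add: of_nat_sum if_distrib[of of_nat] cong: if_cong)
  also have "\<dots> = (\<Sum>b<r. ?g b)"
    using assms(3) by (intro sum.mono_neutral_left) auto
  also have "\<dots> = (\<Sum>b<r. (step_coeff l (k+1) (Suc b) * HP r (k+2) (r - b)) $ n)"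
  proof (intro sum.cong refl)
    fix b
    have "odd (k+2)" using assms(2) by simp
    note HP_k2 = HP_eq_standard_count[OF assms(1) this diff_le_self]
    show "?g b = (step_coeff l (k+1) (Suc b) * HP r (k+2) (r - b)) $ n"
      unfolding step_coeff_mult_nth HP_k2 by simp
  qed
  also have "\<dots> = (\<Sum>j=1..r. step_coeff l (k+1) j * HP r (k+2) (r-j+1)) $ n"
    by (simp add: fps_sum_nth sum.atLeast1_atMost_eq Suc_diff_Suc)
  finally show "(HP r k l :: 'a fps) $ n = (\<Sum>j=1..r. step_coeff l (k+1) j * HP r (k+2) (r-j+1)) $ n" .
qed

lemma sum_mult_HP_odd_expand:
  assumes "r \<ge> 2" "odd k"
  shows "(\<Sum>m=1..r. N m * (HP r k (r-m+1) :: 'a::field fps))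
       = (\<Sum>j=1..r. (\<Sum>m=1..r. N m * step_coeff (r-m+1) (k+1) j) * HP r (k+2) (r-j+1))"
proof -
  have "(\<Sum>m=1..r. N m * HP r k (r-m+1))
      = (\<Sum>m=1..r. \<Sum>j=1..r. N m * step_coeff (r-m+1) (k+1) j * HP r (k+2) (r-j+1))"
  proof (intro sum.cong refl)
    fix m assume "m \<in> {1..r}"
    then have "r-m+1 \<le> r" by auto
    show "N m * HP r k (r-m+1)
        = (\<Sum>j=1..r. N m * step_coeff (r-m+1) (k+1) j * HP r (k+2) (r-j+1))"
      unfolding HP_odd_expand[OF assms \<open>r-m+1 \<le> r\<close>] by (simp add: sum_distrib_left mult.assoc)
  qed
  also have "\<dots> = (\<Sum>j=1..r. (\<Sum>m=1..r. N m * step_coeff (r-m+1) (k+1) j) * HP r (k+2) (r-j+1))"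
    by (subst sum.swap) (simp add: sum_distrib_right)
  finally show ?thesis .
qed

lemma sum_mult_step_coeff:
  fixes N :: "nat \<Rightarrow> 'a::field fps"
  assumes "1 \<le> j" "j \<le> r"
  shows "(\<Sum>m=1..r. N m * step_coeff (r-m+1) e j)
       = fps_X ^ (e*(j-1)) * (\<Sum>m=1..r-j+1. N m) + fps_X ^ (e*j-1) * (\<Sum>m=1..r-j. N m)"
proof -
  have "(\<Sum>m=1..r. N m * step_coeff (r-m+1) e j)
      = (\<Sum>m=1..r. if m \<le> r-j+1 then fps_X ^ (e*(j-1)) * N m else 0)
      + (\<Sum>m=1..r. if m \<le> r-j then fps_X ^ (e*j-1) * N m else 0)"
    unfolding sum.distrib[symmetric] using assms
    by (intro sum.cong refl) (auto simp: step_coeff_def distrib_left mult.commute)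
  also have "\<dots> = (\<Sum>m=1..r-j+1. fps_X ^ (e*(j-1)) * N m) + (\<Sum>m=1..r-j. fps_X ^ (e*j-1) * N m)"
    using assms by (intro arg_cong2[where f="(+)"] sum.mono_neutral_cong_right) auto
  finally show ?thesis
    by (simp only: sum_distrib_left)
qed

lemma Ncoef_base:
  assumes "1 \<le> i" "1 \<le> j"
  shows "Ncoef r J i (J+1) j = step_coeff i (2*(J+1)) j"
  using assms by (subst Ncoef.simps) (auto simp: step_coeff_def add.commute)

lemma Ncoef_Suc:
  assumes "J + 1 \<le> d" "1 \<le> j" "j \<le> r"
  shows "Ncoef r J i (Suc d) j = (\<Sum>m=1..r. Ncoef r J i d m * step_coeff (r-m+1) (2 * Suc d) j)"
  unfolding sum_mult_step_coeff[OF assms(2,3)] using assms(1) by (subst Ncoef.simps) simp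

lemma HP_eq_sum_Ncoef_base:
  assumes "r \<ge> 2" "1 \<le> i" "i \<le> r"
  shows "(HP r (2*J+1) i :: 'a::field fps)
           = (\<Sum>j=1..r. Ncoef r J i (J+1) j * HP r (2*(J+1)+1) (r-j+1))"
proof -
  have "(HP r (2*J+1) i :: 'a fps) = (\<Sum>j=1..r. step_coeff i (2*(J+1)) j * HP r (2*(J+1)+1) (r-j+1))"
    using HP_odd_expand[of r "2*J+1" i] assms(1,3) by simp
  also have "\<dots> = (\<Sum>j=1..r. Ncoef r J i (J+1) j * HP r (2*(J+1)+1) (r-j+1))"
  proof (intro sum.cong refl)
    fix j assume "j \<in> {1..r}"
    then have "1 \<le> j" by simp
    then show "step_coeff i (2*(J+1)) j * HP r (2*(J+1)+1) (r-j+1)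
        = (Ncoef r J i (J+1) j :: 'a fps) * HP r (2*(J+1)+1) (r-j+1)"
      by (simp only: Ncoef_base[OF assms(2) \<open>1 \<le> j\<close>])
  qed
  finally show ?thesis .
qed

theorem lemma2p2:
  fixes r i J d :: nat
  assumes "r \<ge> 2" and "1 \<le> i" and "i \<le> r" and "d \<ge> J + 1"
  shows "(HP r (2*J+1) i :: 'a::field_char_0 fps)
           = (\<Sum>j=1..r. Ncoef r J i d j * HP r (2*d+1) (r-j+1))"
  using assms(4)
proof (induction d rule: dec_induct)
  case base
  show ?case
    using HP_eq_sum_Ncoef_base[OF assms(1-3)] by simp
next
  case (step d)
  have "(HP r (2*J+1) i :: 'a fps) = (\<Sum>m=1..r. Ncoef r J i d m * HP r (2*d+1) (r-m+1))"
    by (rule step.IH)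
  also have "\<dots> = (\<Sum>j=1..r. (\<Sum>m=1..r. Ncoef r J i d m * step_coeff (r-m+1) (2 * Suc d) j)
                                * HP r (2 * Suc d + 1) (r-j+1))"
    using sum_mult_HP_odd_expand[OF assms(1), of "2*d+1"] by simp
  also have "\<dots> = (\<Sum>j=1..r. Ncoef r J i (Suc d) j * HP r (2 * Suc d + 1) (r-j+1))"
    using step.hyps(1) by (intro sum.cong refl) (simp add: Ncoef_Suc)
  finally show ?case .
qed

end
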